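(* Let $\mathcal A\subset\mathbb R^n$ be compact with diameter $D_{\mathcal A}<\infty$ and $\mathcal X=\mathrm{conv}(\mathcal A)$ be $\alpha$-strongly convex for some $\alpha>0$. Let $f$ be convex and differentiable with $L$-Lipschitz gradient. Run the AC-FW algorithm with the closed-loop Frank-Wolfe subroutine and a damping sequence satisfying Condition (D), let $\eta\in(1,2)$, and let $\{h_t\}_{t\ge0}$ be the elements of $\mathcal G\cap\mathcal I_\eta$ in increasing order. Then for every $t\ge0$, $$f(x_{h_{t+1}})-f(x^\star)\le\max\left\{\frac{\eta}{2},\ 1-\left(1-\frac{\eta}{2}\right)\frac{\alpha\|\nabla f(x_{h_t})\|_2}{8L}\right\}\bigl(f(x_{h_t})-f(x^\star)\bigr).$$ If in addition $f$ is $\mu$-strongly convex for some $\mu>0$, then for every $t\ge0$, $$f(x_{h_{t+1}})-f(x^\star)\le\max\left\{\frac{\eta}{2},\ 1-\left(1-\frac{\eta}{2}\right)\frac{\alpha\sqrt{\mu\,(f(x_{h_t})-f(x^\star))}}{8\sqrt2\,L}\right\}\bigl(f(x_{h_t})-f(x^\star)\bigr).$$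
   Context: $D_{\mathcal A}:=\sup_{x,y\in\mathcal A}\|x-y\|_2$; $\|\nabla f(x)-\nabla f(y)\|_2\le L\|x-y\|_2$ for all $x,y\in\mathbb R^n$. $x^\star$ is an optimal solution of $\min_{x\in\mathcal X}f(x)$. $\mathcal X$ is $\alpha$-strongly convex if for all $\rho\in[0,1]$, $x,y\in\mathcal X$ and $z\in\mathbb R^n$ with $\|z\|_2\le1$: $\rho x+(1-\rho)y+\frac{\rho(1-\rho)\alpha\|x-y\|_2^2}{2}z\in\mathcal X$. $f$ is $\mu$-strongly convex if $f(y)\ge f(x)+\nabla f(x)^\top(y-x)+\frac\mu2\|y-x\|_2^2$ for all $x,y$. For $x\ne y$, $\ell(x,y):=2|f(y)-f(x)-\nabla f(x)^\top(y-x)|/\|y-x\|_2^2$, $\ell(x,x):=0$. AC-FW algorithm with closed-loop Frank-Wolfe subroutine: given $\{r_t\}_{t\ge0}$, pick $x_{-1}\in\mathcal A$, $x_0\in\arg\min_{v\in\mathcal A}\nabla f(x_{-1})^\top v$, $L_0:=\ell(x_{-1},x_0)$. For $t=0,1,\dots$: $v_t\in\arg\min_{v\in\mathcal A}\nabla f(x_t)^\top v$; $d_t:=x_t-v_t$, $\gamma_t^{\max}:=1$; $\gamma_t:=\min\{\nabla f(x_t)^\top d_t/(L_t\|d_t\|_2^2),\gamma_t^{\max}\}$; $\bar x_{t+1}:=x_t-\gamma_td_t$; $L_{t+1}:=\max\{\ell(x_t,\bar x_{t+1}),r_tL_t\}$; $x_{t+1}:=\bar x_{t+1}$ if $f(\bar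 x_{t+1})<f(x_t)$, else $x_{t+1}:=x_t$. $\mathcal I_\eta:=\{t\ge0:L_{t+1}\le\eta L_t\}$; $\mathcal G:=\{t\ge0:\gamma_t^{\max}\ge1\text{ or }\gamma_t<\gamma_t^{\max}\}$ (here $\mathcal G$ is all of $\mathbb Z_+$). Condition (D): $r_t\in(0,1]$ for all $t$ and $\prod_{t\ge0}r_t\in(0,1]$. *)

theory Defs
  imports "HOL-Analysis.Analysis"
begin

definition strongly_convex_set :: "real \<Rightarrow> 'a::euclidean_space set \<Rightarrow> bool" where
  "strongly_convex_set \<alpha> X \<longleftrightarrow>
     (\<forall>\<rho>\<in>{0..1}. \<forall>x\<in>X. \<forall>y\<in>X. \<forall>z. norm z \<le> 1 \<longrightarrow>
        \<rho> *\<^sub>R x + (1 - \<rho>) *\<^sub>R y + ((\<rho> * (1 - \<rho>) * \<alpha> * (norm (x - y))\<^sup>2) / 2) *\<^sub>R z \<in> X)"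

text \<open>Local smoothness estimate ell(x,y); g is the gradient of f.\<close>
definition ell :: "('a::euclidean_space \<Rightarrow> real) \<Rightarrow> ('a \<Rightarrow> 'a) \<Rightarrow> 'a \<Rightarrow> 'a \<Rightarrow> real" where
  "ell f g x y = (if x = y then 0
      else 2 * \<bar>f y - f x - g x \<bullet> (y - x)\<bar> / (norm (y - x))\<^sup>2)"

text \<open>Short step size of the closed-loop FW subroutine with gamma_max = 1.
  A quotient with zero denominator (only possible when L_t = 0 or d_t = 0) is read
  as +infinity, so the minimum equals gamma_max = 1 (when d_t = 0 the step is void).\<close>
definition fw_gamma :: "real \<Rightarrow> 'a::euclidean_space \<Rightarrow> 'a \<Rightarrow> real" where
  "fw_gamma Lt gr d = (if Lt * (norm d)\<^sup>2 = 0 then 1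
      else min ((gr \<bullet> d) / (Lt * (norm d)\<^sup>2)) 1)"

text \<open>A run of AC-FW with the closed-loop Frank-Wolfe subroutine: x_{-1} = xm1,
  iterates x t, FW vertices v t, smoothness estimates Lt t, damping sequence r.\<close>
definition acfw_run ::
  "'a::euclidean_space set \<Rightarrow> ('a \<Rightarrow> real) \<Rightarrow> ('a \<Rightarrow> 'a) \<Rightarrow> (nat \<Rightarrow> real) \<Rightarrow>
   'a \<Rightarrow> (nat \<Rightarrow> 'a) \<Rightarrow> (nat \<Rightarrow> 'a) \<Rightarrow> (nat \<Rightarrow> real) \<Rightarrow> bool" where
  "acfw_run A f g r xm1 x v Lt \<longleftrightarrow>
     xm1 \<in> A \<and>
     x 0 \<in> A \<and> (\<forall>u\<in>A. g xm1 \<bullet> x 0 \<le> g xm1 \<bullet> u) \<and>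
     Lt 0 = ell f g xm1 (x 0) \<and>
     (\<forall>t. v t \<in> A \<and> (\<forall>u\<in>A. g (x t) \<bullet> v t \<le> g (x t) \<bullet> u) \<and>
        (let d = x t - v t;
             \<gamma> = fw_gamma (Lt t) (g (x t)) d;
             xb = x t - \<gamma> *\<^sub>R d
         in Lt (Suc t) = max (ell f g (x t) xb) (r t * Lt t) \<and>
            x (Suc t) = (if f xb < f (x t) then xb else x t)))"

definition condition_D :: "(nat \<Rightarrow> real) \<Rightarrow> bool" where
  "condition_D r \<longleftrightarrow> (\<forall>t. 0 < r t \<and> r t \<le> 1) \<and>
     (\<exists>p. 0 < p \<and> p \<le> 1 \<and> (\<lambda>N. \<Prod>t<N. r t) \<longlonglongrightarrow> p)"

text \<open>I_eta = {t. L_{t+1} <= eta L_t}; G = {t. gamma_max >= 1 or gamma_t < gamma_max}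
  with gamma_max = 1 always, hence G = all of nat.\<close>
definition I_eta :: "real \<Rightarrow> (nat \<Rightarrow> real) \<Rightarrow> nat set" where
  "I_eta \<eta> Lt = {t. Lt (Suc t) \<le> \<eta> * Lt t}"

definition G_set :: "nat set" where
  "G_set = {t::nat. (1::real) \<ge> 1}"

end

theory Submission
  imports Defs
begin

text \<open>
  On a step t in I_eta the new smoothness estimate, which dominates ell(x_t, xbar_{t+1}), is at
  most eta L_t, so the short step decreases f by at least (1 - eta/2) gamma_t grad f(x_t)^T d_t.
  The Frank-Wolfe gap grad f(x_t)^T d_t dominates f(x_t) - f(x*) by convexity of f, and
  dominates alpha |grad f(x_t)| |d_t|^2 / 4 by strong convexity of the feasible set, applied
  at the midpoint of x_t and v_t pushed against the gradient. Since L_t <= 2L (the Lipschitz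
  gradient bounds every ell by 2L, and r_t <= 1), these give
  gamma_t grad f(x_t)^T d_t >= min {1, alpha |grad f(x_t)| / (8L)} (f(x_t) - f(x*)), and the
  values f(x_t) never increase. For mu-strongly convex f, the Polyak-Lojasiewicz inequality
  2 mu (f(x_t) - f(x*)) <= |grad f(x_t)|^2 turns this into the second bound.
\<close>

lemma convex_on_gradient_inequality:
  fixes f :: "'a::real_inner \<Rightarrow> real"
  assumes convex: "convex_on UNIV f"
    and gradient: "\<And>y. (f has_derivative (\<lambda>h. g y \<bullet> h)) (at y)"
  shows "f x + g x \<bullet> (y - x) \<le> f y"
proof -
  define \<phi> where "\<phi> = (\<lambda>t::real. f (x + t *\<^sub>R (y - x)))"
  have "convex_on UNIV \<phi>"
  proof (rule convex_onI)
    fix t a b :: real assume t: "0 < t" "t < 1"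
    have "x + ((1 - t) * a + t * b) *\<^sub>R (y - x)
        = (1 - t) *\<^sub>R (x + a *\<^sub>R (y - x)) + t *\<^sub>R (x + b *\<^sub>R (y - x))"
      by (simp add: algebra_simps)
    then show "\<phi> ((1 - t) *\<^sub>R a + t *\<^sub>R b) \<le> (1 - t) * \<phi> a + t * \<phi> b"
      using t convex_onD[OF convex, of t "x + a *\<^sub>R (y - x)" "x + b *\<^sub>R (y - x)"]
      by (simp add: \<phi>_def)
  qed simp
  moreover have "(\<phi> has_field_derivative (g x \<bullet> (y - x))) (at 0)"
  proof -
    have "((\<lambda>t::real. x + t *\<^sub>R (y - x)) has_derivative (\<lambda>t. t *\<^sub>R (y - x))) (at 0)"
      by (auto intro!: derivative_eq_intros)
    from has_derivative_compose[OF this, of f "\<lambda>h. g x \<bullet> h"] gradient[of x]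
    have "(\<phi> has_derivative (\<lambda>t. t * (g x \<bullet> (y - x)))) (at 0)"
      by (simp add: \<phi>_def o_def)
    moreover have "(\<lambda>t. t * (g x \<bullet> (y - x))) = (*) (g x \<bullet> (y - x))"
      by (auto simp: fun_eq_iff)
    ultimately show ?thesis
      by (simp add: has_field_derivative_def)
  qed
  ultimately have "g x \<bullet> (y - x) * (1 - 0) \<le> \<phi> 1 - \<phi> 0"
    by (intro convex_on_imp_above_tangent[where A = UNIV]) auto
  then show ?thesis
    by (simp add: \<phi>_def)
qed

lemma linearization_error_le:
  fixes f :: "'a::euclidean_space \<Rightarrow> real"
  assumes gradient: "\<And>y. (f has_derivative (\<lambda>h. g y \<bullet> h)) (at y)"
    and lipschitz: "\<And>y z. norm (g y - g z) \<le> L * norm (y - z)"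
    and "0 \<le> L"
  shows "\<bar>f y - f x - g x \<bullet> (y - x)\<bar> \<le> L * (norm (y - x))\<^sup>2"
proof -
  have "norm (f y - f x - g x \<bullet> (y - x)) \<le> norm (y - x) * (L * norm (y - x))"
  proof (rule differentiable_bound_linearization
      [where S = "closed_segment x y" and f' = "\<lambda>z h. g z \<bullet> h"])
    show "x + t *\<^sub>R (y - x) \<in> closed_segment x y" if "t \<in> {0..1}" for t
    proof -
      have "x + t *\<^sub>R (y - x) = (1 - t) *\<^sub>R x + t *\<^sub>R y"
        by (simp add: algebra_simps)
      then show ?thesis
        using that by (auto simp: closed_segment_def)
    qed
    show "(f has_derivative (\<lambda>h. g z \<bullet> h)) (at z within closed_segment x y)" for z
      using gradient has_derivative_at_withinI by blast
    show "x \<in> closed_segment x y"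
      by simp
    fix z assume z: "z \<in> closed_segment x y"
    have "onorm ((\<lambda>h. g z \<bullet> h) - (\<lambda>h. g x \<bullet> h)) \<le> norm (g z - g x)"
      by (rule onorm_le) (simp add: inner_diff_left[symmetric] Cauchy_Schwarz_ineq2)
    also have "\<dots> \<le> L * norm (z - x)"
      by (rule lipschitz)
    also have "\<dots> \<le> L * norm (y - x)"
      using z \<open>0 \<le> L\<close> dist_in_closed_segment[OF z]
      by (intro mult_left_mono) (auto simp: dist_norm norm_minus_commute)
    finally show "onorm ((\<lambda>h. g z \<bullet> h) - (\<lambda>h. g x \<bullet> h)) \<le> L * norm (y - x)" .
  qed
  then show ?thesis
    by (simp add: power2_eq_square mult_ac)
qed

lemma ell_nonneg: "0 \<le> ell f g x y"
  by (simp add: ell_def)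

lemma ell_le:
  assumes "\<And>y. (f has_derivative (\<lambda>h. g y \<bullet> h)) (at y)"
    and "\<And>y z. norm (g y - g z) \<le> L * norm (y - z)"
    and "0 \<le> L"
  shows "ell f g x y \<le> 2 * L"
proof (cases "x = y")
  case False
  have "\<bar>f y - f x - g x \<bullet> (y - x)\<bar> \<le> L * (norm (y - x))\<^sup>2"
    by (rule linearization_error_le[OF assms])
  with False show ?thesis
    by (simp add: ell_def divide_le_eq)
qed (simp add: ell_def \<open>0 \<le> L\<close>)

lemma le_linearization_plus_ell:
  "f y \<le> f x + g x \<bullet> (y - x) + ell f g x y / 2 * (norm (y - x))\<^sup>2"
proof (cases "x = y")
  case False
  then have "ell f g x y / 2 * (norm (y - x))\<^sup>2 = \<bar>f y - f x - g x \<bullet> (y - x)\<bar>"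
    by (simp add: ell_def)
  then show ?thesis
    by linarith
qed simp

lemma convex_hull_inner_ge:
  assumes "\<And>u. u \<in> A \<Longrightarrow> c \<bullet> v \<le> c \<bullet> u" and "w \<in> convex hull A"
  shows "c \<bullet> v \<le> c \<bullet> w"
proof -
  have "convex hull A \<subseteq> {w. c \<bullet> v \<le> c \<bullet> w}"
    by (rule hull_minimal) (auto intro: assms(1) convex_halfspace_ge)
  with assms(2) show ?thesis
    by auto
qed

lemma strongly_convex_set_inner_gap:
  assumes "strongly_convex_set \<alpha> X" and "x \<in> X" "v \<in> X"
    and argmin: "\<And>w. w \<in> X \<Longrightarrow> G \<bullet> v \<le> G \<bullet> w"
  shows "\<alpha> * norm G * (norm (x - v))\<^sup>2 / 4 \<le> G \<bullet> (x - v)"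
proof (cases "G = 0")
  case False
  define z where "z = - (1 / norm G) *\<^sub>R G"
  have "norm z \<le> 1" and Gz: "G \<bullet> z = - norm G"
    using False by (simp_all add: z_def power2_norm_eq_inner[symmetric] power2_eq_square)
  define w where "w = (1/2) *\<^sub>R x + (1 - 1/2) *\<^sub>R v
    + ((1/2 * (1 - 1/2) * \<alpha> * (norm (x - v))\<^sup>2) / 2) *\<^sub>R z"
  have "w \<in> X"
    unfolding w_def
    by (rule assms(1)[unfolded strongly_convex_set_def, rule_format, OF _ assms(2,3)
        \<open>norm z \<le> 1\<close>]) simp
  then have "G \<bullet> v \<le> G \<bullet> w"
    by (rule argmin)
  also have "G \<bullet> w = (G \<bullet> x) / 2 + (G \<bullet> v) / 2 - \<alpha> * (norm (x - v))\<^sup>2 / 8 * norm G"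
    by (simp add: w_def inner_add_right Gz algebra_simps)
  finally show ?thesis
    by (simp add: inner_diff_right algebra_simps)
qed simp

lemma fw_gamma_bounds:
  assumes "0 \<le> Lt" and "0 \<le> G \<bullet> d"
  shows "0 \<le> fw_gamma Lt G d" and "fw_gamma Lt G d \<le> 1"
  using assms by (auto simp: fw_gamma_def)

lemma fw_gamma_quadratic_le:
  assumes "0 \<le> Lt" and "0 \<le> G \<bullet> d"
  shows "Lt * (fw_gamma Lt G d)\<^sup>2 * (norm d)\<^sup>2 \<le> fw_gamma Lt G d * (G \<bullet> d)"
proof (cases "Lt * (norm d)\<^sup>2 = 0")
  case True
  then show ?thesis
    using assms by (auto simp: fw_gamma_def)
next
  case False
  define \<gamma> where "\<gamma> = fw_gamma Lt G d"
  have Q: "0 < Lt * (norm d)\<^sup>2"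
    using False assms(1) by (simp add: order_less_le)
  then have "\<gamma> * (Lt * (norm d)\<^sup>2) \<le> G \<bullet> d"
    using False by (auto simp: \<gamma>_def fw_gamma_def min_def field_simps)
  then have "\<gamma> * (\<gamma> * (Lt * (norm d)\<^sup>2)) \<le> \<gamma> * (G \<bullet> d)"
    using fw_gamma_bounds[OF assms] by (intro mult_left_mono) (auto simp: \<gamma>_def)
  then show ?thesis
    by (simp add: \<gamma>_def power2_eq_square mult_ac)
qed

lemma fw_gamma_progress:
  assumes "0 \<le> Lt" "Lt \<le> K" "0 \<le> \<kappa>"
    and scaling: "\<kappa> * (norm d)\<^sup>2 \<le> G \<bullet> d"
    and "0 \<le> h" "h \<le> G \<bullet> d"
  shows "h * min 1 (\<kappa> / K) \<le> fw_gamma Lt G d * (G \<bullet> d)"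
proof (cases "fw_gamma Lt G d = 1")
  case True
  have "h * min 1 (\<kappa> / K) \<le> h"
    using \<open>0 \<le> h\<close> by (simp add: mult_left_le)
  with True \<open>h \<le> G \<bullet> d\<close> show ?thesis
    by simp
next
  case False
  define Q where "Q = Lt * (norm d)\<^sup>2"
  have "Q \<noteq> 0"
    using False by (auto simp: Q_def fw_gamma_def)
  then have Q: "0 < Q"
    using \<open>0 \<le> Lt\<close> by (simp add: Q_def order_less_le)
  have \<gamma>: "fw_gamma Lt G d = (G \<bullet> d) / Q"
    using False \<open>Q \<noteq> 0\<close> by (auto simp: Q_def fw_gamma_def min_def split: if_splits)
  have "Q \<le> K * (norm d)\<^sup>2"
    unfolding Q_def using \<open>Lt \<le> K\<close> by (simp add: mult_right_mono)
  then have Kd: "0 < K * (norm d)\<^sup>2"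
    using Q by linarith
  have "h * min 1 (\<kappa> / K) \<le> (G \<bullet> d) * (\<kappa> / K)"
    using assms Kd by (intro mult_mono) (auto simp: zero_less_mult_iff)
  also have "\<dots> = (G \<bullet> d) * (\<kappa> * (norm d)\<^sup>2) / (K * (norm d)\<^sup>2)"
    using Kd by simp
  also have "\<dots> \<le> (G \<bullet> d) * (G \<bullet> d) / (K * (norm d)\<^sup>2)"
    using assms Kd by (intro divide_right_mono mult_left_mono) auto
  also have "\<dots> \<le> (G \<bullet> d) * (G \<bullet> d) / Q"
    using Q \<open>Q \<le> K * (norm d)\<^sup>2\<close> by (intro divide_left_mono) auto
  also have "\<dots> = fw_gamma Lt G d * (G \<bullet> d)"
    by (simp add: \<gamma>)
  finally show ?thesis .
qed

lemma strongly_convex_imp_PL_inequality: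
  fixes f :: "'a::real_inner \<Rightarrow> real"
  assumes "0 < \<mu>"
    and strongly_convex: "\<And>y z. f y + g y \<bullet> (z - y) + \<mu> / 2 * (norm (z - y))\<^sup>2 \<le> f z"
  shows "2 * \<mu> * (f x - f y) \<le> (norm (g x))\<^sup>2"
proof -
  define n where "n = norm (y - x)"
  have "- (g x \<bullet> (y - x)) \<le> norm (g x) * n"
    using norm_cauchy_schwarz[of "- g x" "y - x"] by (simp add: n_def)
  with strongly_convex[of x y] have "f x - f y \<le> norm (g x) * n - \<mu> / 2 * n\<^sup>2"
    by (simp add: n_def)
  then have "2 * \<mu> * (f x - f y) \<le> 2 * \<mu> * (norm (g x) * n - \<mu> / 2 * n\<^sup>2)"
    using \<open>0 < \<mu>\<close> by simp
  also have "\<dots> \<le> (norm (g x))\<^sup>2"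
    using zero_le_power2[of "\<mu> * n - norm (g x)"] by (simp add: power2_eq_square algebra_simps)
  finally show ?thesis .
qed

lemma one_minus_mult_min_eq_max:
  fixes a c :: real
  assumes "0 \<le> a"
  shows "1 - a * min 1 c = max (1 - a) (1 - a * c)"
proof (cases "c \<le> 1")
  case True
  then show ?thesis
    using mult_left_mono[OF True assms] by (simp add: min_def max_def)
next
  case False
  then show ?thesis
    using mult_left_mono[of 1 c a] assms by (simp add: min_def max_def)
qed

locale acfw =
  fixes A :: "'a::euclidean_space set" and f :: "'a \<Rightarrow> real" and g :: "'a \<Rightarrow> 'a"
    and L :: real and r :: "nat \<Rightarrow> real"
    and xm1 :: 'a and x v :: "nat \<Rightarrow> 'a" and Lt :: "nat \<Rightarrow> real"
  assumes run: "acfw_run A f g r xm1 x v Lt"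
    and gradient: "\<And>y. (f has_derivative (\<lambda>h. g y \<bullet> h)) (at y)"
    and gradient_lipschitz: "\<And>y z. norm (g y - g z) \<le> L * norm (y - z)"
    and L_nonneg: "0 \<le> L"
    and damping_nonneg: "\<And>t. 0 \<le> r t"
    and damping_le_1: "\<And>t. r t \<le> 1"
begin

definition fw_dir :: "nat \<Rightarrow> 'a" where
  "fw_dir t = x t - v t"

definition fw_step :: "nat \<Rightarrow> real" where
  "fw_step t = fw_gamma (Lt t) (g (x t)) (fw_dir t)"

definition fw_trial :: "nat \<Rightarrow> 'a" where
  "fw_trial t = x t - fw_step t *\<^sub>R fw_dir t"

lemma x_0_in_A: "x 0 \<in> A"
  and Lt_0: "Lt 0 = ell f g xm1 (x 0)"
  and v_in_A: "v t \<in> A"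
  and v_argmin: "u \<in> A \<Longrightarrow> g (x t) \<bullet> v t \<le> g (x t) \<bullet> u"
  and Lt_Suc: "Lt (Suc t) = max (ell f g (x t) (fw_trial t)) (r t * Lt t)"
  and x_Suc: "x (Suc t) = (if f (fw_trial t) < f (x t) then fw_trial t else x t)"
  using run by (auto simp: acfw_run_def Let_def fw_dir_def fw_step_def fw_trial_def)

lemma Lt_nonneg: "0 \<le> Lt t"
proof (induction t)
  case (Suc t)
  then show ?case
    using damping_nonneg[of t] by (simp add: Lt_Suc le_max_iff_disj)
qed (simp add: Lt_0 ell_nonneg)

lemma Lt_le: "Lt t \<le> 2 * L"
proof (induction t)
  case 0
  show ?case
    using ell_le[OF gradient gradient_lipschitz L_nonneg] by (simp add: Lt_0)
next
  case (Suc t)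
  have "r t * Lt t \<le> Lt t"
    using damping_nonneg[of t] damping_le_1[of t] Lt_nonneg[of t] by (simp add: mult_left_le_one_le)
  with Suc show ?case
    using ell_le[OF gradient gradient_lipschitz L_nonneg] by (simp add: Lt_Suc)
qed

lemma v_argmin_hull: "w \<in> convex hull A \<Longrightarrow> g (x t) \<bullet> v t \<le> g (x t) \<bullet> w"
  by (rule convex_hull_inner_ge[OF v_argmin])

lemma fw_gap_nonneg: "x t \<in> convex hull A \<Longrightarrow> 0 \<le> g (x t) \<bullet> fw_dir t"
  using v_argmin_hull[of "x t" t] by (simp add: fw_dir_def inner_diff_right)

lemma x_in_convex_hull: "x t \<in> convex hull A"
proof (induction t)
  case 0
  show ?case
    using x_0_in_A by (rule hull_inc)
next
  case (Suc t)
  note \<gamma> = fw_gamma_bounds[OF Lt_nonneg fw_gap_nonneg[OF Suc]]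
  have "fw_trial t = (1 - fw_step t) *\<^sub>R x t + fw_step t *\<^sub>R v t"
    by (simp add: fw_trial_def fw_dir_def algebra_simps)
  also have "\<dots> \<in> convex hull A"
    using \<gamma> Suc hull_inc[OF v_in_A]
    by (intro convexD[OF convex_convex_hull]) (auto simp: fw_step_def)
  finally show ?case
    using Suc by (simp add: x_Suc)
qed

lemma f_x_Suc_le_trial: "f (x (Suc t)) \<le> f (fw_trial t)"
  by (simp add: x_Suc)

lemma f_x_antimono: "m \<le> n \<Longrightarrow> f (x n) \<le> f (x m)"
  by (rule lift_Suc_antimono_le[of "\<lambda>n. f (x n)"]) (auto simp: x_Suc)

lemma trial_descent:
  assumes "t \<in> I_eta \<eta> Lt" and "0 \<le> \<eta>"
  shows "f (fw_trial t) \<le> f (x t) - (1 - \<eta> / 2) * (fw_step t * (g (x t) \<bullet> fw_dir t))"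
proof -
  define \<gamma> where "\<gamma> = fw_step t"
  define gap where "gap = g (x t) \<bullet> fw_dir t"
  have step: "fw_trial t - x t = - \<gamma> *\<^sub>R fw_dir t"
    by (simp add: fw_trial_def \<gamma>_def)
  have "ell f g (x t) (fw_trial t) \<le> \<eta> * Lt t"
    using assms(1) by (simp add: I_eta_def Lt_Suc)
  have "ell f g (x t) (fw_trial t) / 2 * (norm (fw_trial t - x t))\<^sup>2
      = ell f g (x t) (fw_trial t) * (\<gamma>\<^sup>2 * (norm (fw_dir t))\<^sup>2) / 2"
    by (simp add: step power_mult_distrib)
  also have "\<dots> \<le> \<eta> * Lt t * (\<gamma>\<^sup>2 * (norm (fw_dir t))\<^sup>2) / 2"
    using \<open>ell f g (x t) (fw_trial t) \<le> \<eta> * Lt t\<close>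
    by (intro divide_right_mono mult_right_mono) auto
  also have "\<dots> = \<eta> / 2 * (Lt t * \<gamma>\<^sup>2 * (norm (fw_dir t))\<^sup>2)"
    by simp
  also have "\<dots> \<le> \<eta> / 2 * (\<gamma> * gap)"
    using fw_gamma_quadratic_le[OF Lt_nonneg fw_gap_nonneg[OF x_in_convex_hull]] \<open>0 \<le> \<eta>\<close>
    by (intro mult_left_mono) (simp_all add: \<gamma>_def gap_def fw_step_def)
  finally have "ell f g (x t) (fw_trial t) / 2 * (norm (fw_trial t - x t))\<^sup>2
      \<le> \<eta> / 2 * (\<gamma> * gap)" .
  moreover have "g (x t) \<bullet> (fw_trial t - x t) = - (\<gamma> * gap)"
    by (simp add: step gap_def)
  ultimately show ?thesis
    using le_linearization_plus_ell[of f "fw_trial t" "x t" g]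
    by (simp add: \<gamma>_def gap_def algebra_simps)
qed

lemma progress_on_I_eta:
  assumes X_sc: "strongly_convex_set \<alpha> (convex hull A)" and "0 \<le> \<alpha>"
    and convex: "convex_on UNIV f"
    and xstar: "xstar \<in> convex hull A" "\<And>y. y \<in> convex hull A \<Longrightarrow> f xstar \<le> f y"
    and \<eta>: "0 \<le> \<eta>" "\<eta> \<le> 2"
    and "s \<in> I_eta \<eta> Lt" "s < s'"
  shows "f (x s') - f xstar
    \<le> max (\<eta> / 2) (1 - (1 - \<eta> / 2) * \<alpha> * norm (g (x s)) / (8 * L)) * (f (x s) - f xstar)"
proof -
  define G where "G = g (x s)"
  define gap where "gap = G \<bullet> fw_dir s"
  define h where "h = f (x s) - f xstar"
  define c where "c = \<alpha> * norm G / (8 * L)"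
  have "0 \<le> h"
    using xstar(2)[OF x_in_convex_hull] by (simp add: h_def)
  have "h \<le> gap"
    using convex_on_gradient_inequality[OF convex gradient, of "x s" xstar]
      v_argmin_hull[OF xstar(1), of s]
    by (simp add: h_def gap_def G_def fw_dir_def inner_diff_right)
  have "\<alpha> * norm G / 4 * (norm (fw_dir s))\<^sup>2 \<le> gap"
    using strongly_convex_set_inner_gap[OF X_sc x_in_convex_hull hull_inc[OF v_in_A]
        v_argmin_hull]
    by (simp add: G_def gap_def fw_dir_def)
  then have "h * min 1 c \<le> fw_step s * gap"
    using fw_gamma_progress[OF Lt_nonneg Lt_le, of "\<alpha> * norm G / 4"] \<open>0 \<le> \<alpha>\<close> \<open>0 \<le> h\<close> \<open>h \<le> gap\<close>
    by (simp add: c_def gap_def G_def fw_step_def)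
  then have "(1 - \<eta> / 2) * (h * min 1 c) \<le> (1 - \<eta> / 2) * (fw_step s * gap)"
    using \<eta> by (intro mult_left_mono) auto
  moreover have "(1 - (1 - \<eta> / 2) * min 1 c) * h = h - (1 - \<eta> / 2) * (h * min 1 c)"
    by (simp add: algebra_simps)
  ultimately have "f (fw_trial s) - f xstar \<le> (1 - (1 - \<eta> / 2) * min 1 c) * h"
    using trial_descent[OF \<open>s \<in> I_eta \<eta> Lt\<close> \<eta>(1)] by (simp add: h_def gap_def G_def)
  also have "1 - (1 - \<eta> / 2) * min 1 c = max (\<eta> / 2) (1 - (1 - \<eta> / 2) * \<alpha> * norm G / (8 * L))"
    using one_minus_mult_min_eq_max[of "1 - \<eta> / 2" c] \<eta> by (simp add: c_def mult.assoc)
  finally have "f (fw_trial s) - f xstar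
      \<le> max (\<eta> / 2) (1 - (1 - \<eta> / 2) * \<alpha> * norm G / (8 * L)) * h" .
  moreover have "f (x s') \<le> f (fw_trial s)"
    using f_x_antimono[of "Suc s" s'] f_x_Suc_le_trial[of s] \<open>s < s'\<close> by simp
  ultimately show ?thesis
    by (simp add: h_def G_def)
qed


lemma progress_on_I_eta_strongly_convex:
  assumes X_sc: "strongly_convex_set \<alpha> (convex hull A)" and "0 \<le> \<alpha>"
    and convex: "convex_on UNIV f"
    and xstar: "xstar \<in> convex hull A" "\<And>y. y \<in> convex hull A \<Longrightarrow> f xstar \<le> f y"
    and \<eta>: "0 \<le> \<eta>" "\<eta> \<le> 2"
    and s: "s \<in> I_eta \<eta> Lt" "s < s'"
    and "0 < \<mu>"
    and strongly_convex: "\<And>y z. f y + g y \<bullet> (z - y) + \<mu> / 2 * (norm (z - y))\<^sup>2 \<le> f z"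
  shows "f (x s') - f xstar
    \<le> max (\<eta> / 2) (1 - (1 - \<eta> / 2) * \<alpha> * sqrt (\<mu> * (f (x s) - f xstar)) / (8 * sqrt 2 * L))
        * (f (x s) - f xstar)"
proof -
  define h where "h = f (x s) - f xstar"
  define G where "G = norm (g (x s))"
  have "\<mu> * h \<le> 2 * G\<^sup>2"
    using strongly_convex_imp_PL_inequality[OF \<open>0 < \<mu>\<close> strongly_convex, of "x s" xstar]
      zero_le_power2[of G] unfolding h_def G_def by linarith
  from real_sqrt_le_mono[OF this]
  have "sqrt (\<mu> * h) \<le> sqrt 2 * G"
    by (simp add: real_sqrt_mult G_def)
  define k where "k = (1 - \<eta> / 2) * \<alpha> / (8 * sqrt 2 * L)"
  have "0 \<le> k"
    using \<eta> \<open>0 \<le> \<alpha>\<close> L_nonneg by (simp add: k_def)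
  have "(1 - \<eta> / 2) * \<alpha> * sqrt (\<mu> * h) / (8 * sqrt 2 * L) = k * sqrt (\<mu> * h)"
    by (simp add: k_def)
  also have "\<dots> \<le> k * (sqrt 2 * G)"
    using \<open>sqrt (\<mu> * h) \<le> sqrt 2 * G\<close> \<open>0 \<le> k\<close> by (rule mult_left_mono)
  also have "\<dots> = (1 - \<eta> / 2) * \<alpha> * G / (8 * L)"
    by (simp add: k_def)
  finally have "max (\<eta> / 2) (1 - (1 - \<eta> / 2) * \<alpha> * G / (8 * L)) * h
      \<le> max (\<eta> / 2) (1 - (1 - \<eta> / 2) * \<alpha> * sqrt (\<mu> * h) / (8 * sqrt 2 * L)) * h"
    using xstar(2)[OF x_in_convex_hull, of s] by (intro mult_right_mono) (auto simp: h_def)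
  with progress_on_I_eta[OF X_sc \<open>0 \<le> \<alpha>\<close> convex xstar(1) xstar(2) \<eta> s] show ?thesis
    by (simp add: h_def G_def)
qed

end

theorem lemma10:
  fixes A :: "'a::euclidean_space set"
    and f :: "'a \<Rightarrow> real" and g :: "'a \<Rightarrow> 'a"
    and L \<alpha> \<eta> :: real and r :: "nat \<Rightarrow> real"
    and xm1 xstar :: 'a and x v :: "nat \<Rightarrow> 'a" and Lt :: "nat \<Rightarrow> real"
  assumes A_compact: "compact A"
    and alpha_pos: "\<alpha> > 0"
    and X_sc: "strongly_convex_set \<alpha> (convex hull A)"
    and f_convex: "convex_on UNIV f"
    and f_grad: "\<And>y. (f has_derivative (\<lambda>h. g y \<bullet> h)) (at y)"
    and L_pos: "L > 0"
    and g_lip: "\<And>y z. norm (g y - g z) \<le> L * norm (y - z)"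
    and xstar_opt: "xstar \<in> convex hull A" "\<And>y. y \<in> convex hull A \<Longrightarrow> f xstar \<le> f y"
    and damping: "condition_D r"
    and run: "acfw_run A f g r xm1 x v Lt"
    and eta: "1 < \<eta>" "\<eta> < 2"
  shows "(\<forall>s s'. s \<in> G_set \<inter> I_eta \<eta> Lt \<longrightarrow> s' \<in> G_set \<inter> I_eta \<eta> Lt \<longrightarrow> s < s' \<longrightarrow>
            (\<forall>u. s < u \<and> u < s' \<longrightarrow> u \<notin> G_set \<inter> I_eta \<eta> Lt) \<longrightarrow>
            f (x s') - f xstar \<le>
              max (\<eta> / 2) (1 - (1 - \<eta> / 2) * \<alpha> * norm (g (x s)) / (8 * L))
                * (f (x s) - f xstar))
       \<and> (\<forall>\<mu>>0. (\<forall>y z. f z \<ge> f y + g y \<bullet> (z - y) + \<mu> / 2 * (norm (z - y))\<^sup>2) \<longrightarrow>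
           (\<forall>s s'. s \<in> G_set \<inter> I_eta \<eta> Lt \<longrightarrow> s' \<in> G_set \<inter> I_eta \<eta> Lt \<longrightarrow> s < s' \<longrightarrow>
            (\<forall>u. s < u \<and> u < s' \<longrightarrow> u \<notin> G_set \<inter> I_eta \<eta> Lt) \<longrightarrow>
            f (x s') - f xstar \<le>
              max (\<eta> / 2) (1 - (1 - \<eta> / 2) * \<alpha> * sqrt (\<mu> * (f (x s) - f xstar))
                                  / (8 * sqrt 2 * L))
                * (f (x s) - f xstar)))"
proof -
  interpret acfw A f g L r xm1 x v Lt
    using run f_grad g_lip L_pos damping unfolding condition_D_def
    by unfold_locales (auto intro: less_imp_le)
  have "0 \<le> \<alpha>" "0 \<le> \<eta>" "\<eta> \<le> 2"
    using alpha_pos eta by simp_all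
  note progress = progress_on_I_eta[OF X_sc \<open>0 \<le> \<alpha>\<close> f_convex xstar_opt(1) xstar_opt(2) this(2,3)]
    and progress_strongly_convex = progress_on_I_eta_strongly_convex
      [OF X_sc \<open>0 \<le> \<alpha>\<close> f_convex xstar_opt(1) xstar_opt(2) this(2,3)]
  show ?thesis
    using progress progress_strongly_convex by auto
qed

end
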